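(* Let $A$ be a nonempty finite set of positive integers. Then \[ M(\sup A) \le \sum_{d=1}^{\sup A} \mu(d)\, 2^{v(A,d)}, \] and equality holds if and only if $\gcd(A)>1$.
   Context: $\sup A$ is the largest element of $A$. $\mu$ is the Möbius function and $M(N)=\sum_{d=1}^N\mu(d)$ is the Mertens function. For a positive integer $d$, $v(A,d)$ is the number of multiples of $d$ in $A$. *)

theory Defs
  imports "HOL-Computational_Algebra.Computational_Algebra"
begin

definition moebius_mu :: "nat \<Rightarrow> int" where
  "moebius_mu d = (if d = 0 then 0
     else if squarefree d then (-1) ^ card (prime_factors d) else 0)"

definition mertens :: "nat \<Rightarrow> int" where
  "mertens N = (\<Sum>d=1..N. moebius_mu d)"

definition v :: "nat set \<Rightarrow> nat \<Rightarrow> nat" where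
  "v A d = card {a \<in> A. d dvd a}"

end

theory Submission
  imports Defs
begin

text \<open>Write \<open>2^v(A,d)\<close> as the number of subsets \<open>S \<subseteq> A\<close> with \<open>d | gcd S\<close> and swap the
  two sums. The empty subset has \<open>gcd = 0\<close>, divisible by every \<open>d\<close>, and contributes \<open>M(sup A)\<close>;
  a nonempty \<open>S\<close> has \<open>0 < gcd S \<le> sup A\<close>, so it contributes the sum of \<open>\<mu>(d)\<close> over the
  divisors \<open>d\<close> of \<open>gcd S\<close>, which is 1 if \<open>gcd S = 1\<close> and 0 otherwise.
  Hence the right-hand side exceeds \<open>M(sup A)\<close> by the number of nonempty subsets of \<open>A\<close> with
  gcd 1, and there is none exactly when \<open>gcd A > 1\<close>.\<close>

lemma prime_factors_prod_primes:
  fixes T :: "nat set"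
  assumes "finite T" "\<forall>p\<in>T. prime p"
  shows "prime_factors (\<Prod>T) = T"
proof -
  have "prime_factors (\<Prod>T) = \<Union>((prime_factors \<circ> (\<lambda>p. p)) ` T)"
    using assms by (intro prime_factors_prod) (auto simp: not_prime_0)
  also have "\<dots> = T" using assms by (auto simp: prime_prime_factors)
  finally show ?thesis .
qed

lemma squarefree_prod_primes:
  fixes T :: "nat set"
  assumes "finite T" "\<forall>p\<in>T. prime p"
  shows "squarefree (\<Prod>T)"
  using assms by (intro squarefree_prod_coprime) (auto simp: primes_coprime squarefree_prime)

lemma moebius_mu_prod_primes:
  assumes "finite T" "\<forall>p\<in>T. prime p"
  shows "moebius_mu (\<Prod>T) = (-1) ^ card T"
  using assms prime_factors_prod_primes squarefree_prod_primes
  by (auto simp: moebius_mu_def)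

lemma prod_prime_factors_squarefree:
  fixes d :: nat
  assumes "squarefree d"
  shows "\<Prod>(prime_factors d) = d"
proof -
  have "d \<noteq> 0" using assms by (metis not_squarefree_0)
  then have "d = (\<Prod>p \<in> prime_factors d. p ^ multiplicity p d)" by (simp add: prod_prime_factors)
  also have "\<dots> = \<Prod>(prime_factors d)"
    using squarefree_factorial_semiring'[OF \<open>d \<noteq> 0\<close>] assms by (intro prod.cong) auto
  finally show ?thesis by simp
qed

lemma prod_subset_prime_factors_dvd:
  fixes n :: nat
  assumes "T \<subseteq> prime_factors n"
  shows "\<Prod>T dvd n"
proof (cases "n = 0")
  case False
  have "\<Prod>T dvd \<Prod>(prime_factors n)" using assms by (intro prod_dvd_prod_subset) auto
  also have "\<dots> dvd (\<Prod>p \<in> prime_factors n. p ^ multiplicity p n)"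
    by (intro prod_dvd_prod) (simp add: prime_factors_multiplicity dvd_power)
  also have "\<dots> = n" using False by (simp add: prod_prime_factors)
  finally show ?thesis .
qed simp

lemma squarefree_divisors_eq_Prod_Pow_prime_factors:
  fixes n :: nat
  assumes "n > 0"
  shows "{d. d dvd n \<and> squarefree d} = Prod ` Pow (prime_factors n)"
proof (intro equalityI subsetI)
  fix d assume "d \<in> {d. d dvd n \<and> squarefree d}"
  then have d: "d dvd n" "squarefree d" by auto
  then have "prime_factors d \<subseteq> prime_factors n" using assms by (intro dvd_prime_factors) auto
  then show "d \<in> Prod ` Pow (prime_factors n)"
    using prod_prime_factors_squarefree[OF d(2)] by (metis PowI image_eqI)
next
  fix d assume "d \<in> Prod ` Pow (prime_factors n)"
  then obtain T where T: "T \<subseteq> prime_factors n" "d = \<Prod>T" by auto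
  then have "finite T" by (meson finite_set_mset finite_subset)
  with T show "d \<in> {d. d dvd n \<and> squarefree d}"
    by (auto intro!: prod_subset_prime_factors_dvd squarefree_prod_primes)
qed

lemma inj_on_Prod_Pow_prime_factors:
  "inj_on Prod (Pow (prime_factors (n::nat)))"
proof (rule inj_onI)
  fix S T assume "S \<in> Pow (prime_factors n)" "T \<in> Pow (prime_factors n)" "\<Prod>S = \<Prod>T"
  then show "S = T"
    using prime_factors_prod_primes[of S] prime_factors_prod_primes[of T]
    by (metis PowD finite_set_mset finite_subset in_prime_factors_imp_prime subsetD)
qed

lemma sum_Pow_neg_one_power_card:
  assumes "finite P" "P \<noteq> {}"
  shows "(\<Sum>T\<in>Pow P. (-1::int) ^ card T) = 0"
proof -
  have "(\<Prod>x\<in>P. (1::int) - 1) = (\<Sum>T\<in>Pow P. (-1) ^ card T * (\<Prod>x\<in>T. 1) * (\<Prod>x\<in>P-T. 1))"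
    by (rule prod_diff_conv_sum[OF assms(1)])
  then show ?thesis using assms by (simp add: power_0_left card_eq_0_iff)
qed

lemma sum_moebius_mu_divisors:
  fixes n :: nat
  assumes "n > 0"
  shows "(\<Sum>d | d dvd n. moebius_mu d) = (if n = 1 then 1 else 0)"
proof -
  have "(\<Sum>d | d dvd n. moebius_mu d) = (\<Sum>d | d dvd n \<and> squarefree d. moebius_mu d)"
    using assms by (intro sum.mono_neutral_right) (auto simp: moebius_mu_def)
  also have "\<dots> = (\<Sum>T\<in>Pow (prime_factors n). moebius_mu (\<Prod>T))"
    by (simp add: squarefree_divisors_eq_Prod_Pow_prime_factors[OF assms]
                  sum.reindex[OF inj_on_Prod_Pow_prime_factors])
  also have "\<dots> = (\<Sum>T\<in>Pow (prime_factors n). (-1) ^ card T)"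
    by (intro sum.cong refl moebius_mu_prod_primes)
       (auto intro: finite_subset dest: in_prime_factors_imp_prime)
  also have "\<dots> = (if n = 1 then 1 else 0)"
  proof (cases "n = 1")
    case False
    then have "prime_factors n \<noteq> {}"
      using assms by (metis prime_factor_nat in_prime_factors_iff neq0_conv empty_iff)
    with False show ?thesis by (simp add: sum_Pow_neg_one_power_card)
  qed simp
  finally show ?thesis .
qed

lemma sum_moebius_mu_dvd_atLeastAtMost:
  fixes n N :: nat
  assumes "0 < n" "n \<le> N"
  shows "(\<Sum>d=1..N. if d dvd n then moebius_mu d else 0) = (if n = 1 then 1 else 0)"
proof -
  have "{d \<in> {1..N}. d dvd n} = {d. d dvd n}"
    using assms by (auto dest: dvd_imp_le intro: gr0I)
  then show ?thesis
    using sum.inter_filter[of "{1..N}" moebius_mu "\<lambda>d. d dvd n"] sum_moebius_mu_divisors[OF assms(1)]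
    by simp
qed

lemma two_power_v_eq_card_dvd_Gcd:
  fixes A :: "nat set"
  assumes "finite A"
  shows "2 ^ v A d = card {S \<in> Pow A. d dvd Gcd S}"
proof -
  have "{S \<in> Pow A. d dvd Gcd S} = Pow {a \<in> A. d dvd a}"
    by (auto simp: dvd_Gcd_iff)
  then show ?thesis using assms by (simp add: v_def card_Pow)
qed

lemma sum_moebius_mu_dvd_Gcd:
  fixes A :: "nat set"
  assumes "\<forall>a\<in>A. 0 < a \<and> a \<le> N" "S \<subseteq> A"
  shows "(\<Sum>d=1..N. if d dvd Gcd S then moebius_mu d else 0)
           = (if S = {} then mertens N else if Gcd S = 1 then 1 else 0)"
proof (cases "S = {}")
  case False
  then obtain a where "a \<in> S" by blast
  with assms have "0 < a" "a \<le> N" "Gcd S dvd a" by (auto intro: Gcd_dvd)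
  then have "0 < Gcd S" "Gcd S \<le> N" by (auto dest: dvd_imp_le intro: gr0I)
  with False show ?thesis using sum_moebius_mu_dvd_atLeastAtMost by presburger
qed (simp add: mertens_def)

lemma sum_moebius_mu_two_power_v:
  fixes A :: "nat set"
  assumes "finite A" "\<forall>a\<in>A. 0 < a \<and> a \<le> N"
  shows "(\<Sum>d=1..N. moebius_mu d * 2 ^ v A d)
           = mertens N + int (card {S \<in> Pow A. S \<noteq> {} \<and> Gcd S = 1})"
proof -
  have "(2::int) ^ v A d = (\<Sum>S\<in>Pow A. if d dvd Gcd S then 1 else 0)" for d
    using assms(1) by (simp add: two_power_v_eq_card_dvd_Gcd sum.If_cases Int_def flip: of_nat_power)
  then have "(\<Sum>d=1..N. moebius_mu d * 2 ^ v A d)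
          = (\<Sum>d=1..N. \<Sum>S\<in>Pow A. if d dvd Gcd S then moebius_mu d else 0)"
    by (simp add: sum_distrib_left if_distrib cong: if_cong)
  also have "\<dots> = (\<Sum>S\<in>Pow A. \<Sum>d=1..N. if d dvd Gcd S then moebius_mu d else 0)"
    by (rule sum.swap)
  also have "\<dots> = (\<Sum>S\<in>Pow A. if S = {} then mertens N else if Gcd S = 1 then 1 else 0)"
    using assms(2) by (intro sum.cong refl sum_moebius_mu_dvd_Gcd) auto
  also have "\<dots> = (\<Sum>S\<in>Pow A. (if S = {} then mertens N else 0)
                                + (if S \<noteq> {} \<and> Gcd S = 1 then 1 else 0))"
    by (intro sum.cong) auto
  also have "\<dots> = mertens N + int (card {S \<in> Pow A. S \<noteq> {} \<and> Gcd S = 1})"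
    using assms(1) by (simp add: sum.distrib sum.If_cases Int_def)
  finally show ?thesis .
qed

lemma Gcd_gt_1_iff_no_coprime_subset:
  fixes A :: "nat set"
  assumes "A \<noteq> {}" "0 \<notin> A"
  shows "1 < Gcd A \<longleftrightarrow> {S \<in> Pow A. S \<noteq> {} \<and> Gcd S = 1} = {}"
proof
  assume "1 < Gcd A"
  moreover have "Gcd A dvd Gcd S" if "S \<subseteq> A" for S
    using that by (auto simp: dvd_Gcd_iff intro: Gcd_dvd)
  ultimately show "{S \<in> Pow A. S \<noteq> {} \<and> Gcd S = 1} = {}"
    by (metis (mono_tags, lifting) Collect_empty_eq PowD nat_dvd_1_iff_1 less_irrefl)
next
  assume "{S \<in> Pow A. S \<noteq> {} \<and> Gcd S = 1} = {}"
  then have "Gcd A \<noteq> 1" using assms(1) by auto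
  moreover have "Gcd A \<noteq> 0" using assms by (auto simp: Gcd_0_iff)
  ultimately show "1 < Gcd A" by linarith
qed

theorem theorem4p3:
  fixes A :: "nat set"
  assumes "finite A" and "A \<noteq> {}" and "\<forall>a\<in>A. a > 0"
  shows "mertens (Max A) \<le> (\<Sum>d=1..Max A. moebius_mu d * 2 ^ v A d)
    \<and> (mertens (Max A) = (\<Sum>d=1..Max A. moebius_mu d * 2 ^ v A d) \<longleftrightarrow> Gcd A > 1)"
proof -
  let ?coprime_subsets = "{S \<in> Pow A. S \<noteq> {} \<and> Gcd S = 1}"
  have "(\<Sum>d=1..Max A. moebius_mu d * 2 ^ v A d) = mertens (Max A) + int (card ?coprime_subsets)"
    using assms by (intro sum_moebius_mu_two_power_v) auto
  moreover have "finite ?coprime_subsets" using assms(1) by simp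
  moreover have "Gcd A > 1 \<longleftrightarrow> ?coprime_subsets = {}"
    using assms by (intro Gcd_gt_1_iff_no_coprime_subset) auto
  ultimately show ?thesis by auto
qed

end
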